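(* Let $\delta:\mathcal{B}\to B$ be any derivation with Fourier components $\delta_n$. Then for every $b\in\mathcal{B}$ and every finitely supported $x\in c_{00}(\mathbb{Z})\subseteq\ell^2(\mathbb{Z})$, the series $\sum_{n\in\mathbb{Z}}\delta_n(b)x$ converges in $\ell^2(\mathbb{Z})$ and equals $\delta(b)x$.
   Context: Setup: $G$ is an infinite compact (Hausdorff) abelian group, written additively, and $x_1\in G$ generates a dense cyclic subgroup; $x_n=nx_1$. $\widehat G$ is the group of continuous characters. Let $H=\ell^2(\mathbb{Z})$ with canonical basis $\{E_l\}$; $VE_l=E_{l+1}$, $M_fE_l=f(x_l)E_l$, $\mathbb{L}E_l=lE_l$. $B=C^*(V,M_f:f\in C(G))$, $\mathcal{B}$ is the $*$-subalgebra generated by $V,V^{-1},M_\chi$ ($\chi\in\widehat G$). For $\theta\in\mathbb{R}$, $\rho_\theta(b)=e^{i\theta\mathbb{L}}be^{-i\theta\mathbb{L}}$. The $n$-th Fourier component of a derivation $\delta:\mathcal B\to B$ is $\delta_n(b)=\frac{1}{2\pi}\int_0^{2\pi}e^{in\theta}\rho_\theta^{-1}\big(\delta(\rho_\theta(b))\big)\,d\theta$. *)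

theory Defs
  imports "HOL-Analysis.Analysis" "HOL-Library.Function_Algebras"
begin

definition zmult :: "int \<Rightarrow> 'g::ab_group_add \<Rightarrow> 'g" where
  "zmult n x = (if 0 \<le> n then (((+) x) ^^ nat n) 0 else - ((((+) x) ^^ nat (- n)) 0))"

definition infinite_compact_abelian_group :: "'g::{t2_space, ab_group_add} itself \<Rightarrow> bool" where
  "infinite_compact_abelian_group _ \<longleftrightarrow>
     compact (UNIV :: 'g set) \<and> infinite (UNIV :: 'g set) \<and>
     continuous_on UNIV (\<lambda>p :: 'g \<times> 'g. fst p + snd p) \<and>
     continuous_on UNIV (uminus :: 'g \<Rightarrow> 'g)"

definition character :: "('g::{topological_space, ab_group_add} \<Rightarrow> complex) \<Rightarrow> bool" where
  "character ch \<longleftrightarrow> continuous_on UNIV ch \<and> (\<forall>x. cmod (ch x) = 1) \<and>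
     (\<forall>x y. ch (x + y) = ch x * ch y)"

text \<open>A (bounded) operator T is represented by its matrix: T i j = <T E_j, E_i>.\<close>
type_synonym mat = "int \<Rightarrow> int \<Rightarrow> complex"
type_synonym vec = "int \<Rightarrow> complex"

definition ell2 :: "vec \<Rightarrow> bool" where
  "ell2 x \<longleftrightarrow> (\<lambda>n. (cmod (x n))\<^sup>2) summable_on UNIV"

definition l2norm :: "vec \<Rightarrow> real" where
  "l2norm x = sqrt (infsum (\<lambda>n. (cmod (x n))\<^sup>2) UNIV)"

definition fin_supp :: "vec \<Rightarrow> bool" where
  "fin_supp x \<longleftrightarrow> finite {n. x n \<noteq> 0}"

definition mat_app :: "mat \<Rightarrow> vec \<Rightarrow> vec" where
  "mat_app A x = (\<lambda>i. infsum (\<lambda>j. A i j * x j) UNIV)"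

definition mat_mult :: "mat \<Rightarrow> mat \<Rightarrow> mat" where
  "mat_mult A B = (\<lambda>i k. infsum (\<lambda>j. A i j * B j k) UNIV)"

definition mat_adj :: "mat \<Rightarrow> mat" where
  "mat_adj A = (\<lambda>i j. cnj (A j i))"

definition mat_scale :: "complex \<Rightarrow> mat \<Rightarrow> mat" where
  "mat_scale c A = (\<lambda>i j. c * A i j)"

definition diag :: "vec \<Rightarrow> mat" where
  "diag d = (\<lambda>i j. if i = j then d j else 0)"

text \<open>Boundedness, tested on the dense subspace c_00(Z) of finitely supported vectors.\<close>
definition bounded_op :: "mat \<Rightarrow> bool" where
  "bounded_op A \<longleftrightarrow> (\<exists>C. \<forall>x. fin_supp x \<longrightarrow> ell2 (mat_app A x) \<and>
       l2norm (mat_app A x) \<le> C * l2norm x)"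

definition opnorm :: "mat \<Rightarrow> real" where
  "opnorm A = (SUP x\<in>{x. fin_supp x \<and> l2norm x \<le> 1}. l2norm (mat_app A x))"

inductive_set star_alg :: "mat set \<Rightarrow> mat set" for S :: "mat set" where
  gen: "A \<in> S \<Longrightarrow> A \<in> star_alg S"
| add: "A \<in> star_alg S \<Longrightarrow> B \<in> star_alg S \<Longrightarrow> A + B \<in> star_alg S"
| scale: "A \<in> star_alg S \<Longrightarrow> mat_scale c A \<in> star_alg S"
| mult: "A \<in> star_alg S \<Longrightarrow> B \<in> star_alg S \<Longrightarrow> mat_mult A B \<in> star_alg S"
| adj: "A \<in> star_alg S \<Longrightarrow> mat_adj A \<in> star_alg S"

definition cstar_alg :: "mat set \<Rightarrow> mat set" where
  "cstar_alg S = {A. bounded_op A \<and> (\<forall>e>0. \<exists>P\<in>star_alg S. opnorm (A - P) < e)}"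

definition shiftV :: mat where
  "shiftV = (\<lambda>i j. if i = j + 1 then 1 else 0)"

definition shiftVinv :: mat where
  "shiftVinv = (\<lambda>i j. if i = j - 1 then 1 else 0)"

definition multM :: "'g::ab_group_add \<Rightarrow> ('g \<Rightarrow> complex) \<Rightarrow> mat" where
  "multM x1 f = diag (\<lambda>l. f (zmult l x1))"

definition algB :: "'g::{topological_space, ab_group_add} \<Rightarrow> mat set" where
  "algB x1 = cstar_alg ({shiftV} \<union> {multM x1 f | f. continuous_on UNIV f})"

definition algBB :: "'g::{topological_space, ab_group_add} \<Rightarrow> mat set" where
  "algBB x1 = star_alg ({shiftV, shiftVinv} \<union> {multM x1 ch | ch. character ch})"

text \<open>e^{i theta L}, with L E_l = l E_l, and rho_theta(b) = e^{i theta L} b e^{-i theta L}\<close>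
definition expL :: "real \<Rightarrow> mat" where
  "expL \<theta> = diag (\<lambda>l. exp (\<i> * complex_of_real (\<theta> * real_of_int l)))"

definition rho :: "real \<Rightarrow> mat \<Rightarrow> mat" where
  "rho \<theta> A = mat_mult (mat_mult (expL \<theta>) A) (expL (- \<theta>))"

definition is_derivation :: "'g::{topological_space, ab_group_add} \<Rightarrow> (mat \<Rightarrow> mat) \<Rightarrow> bool" where
  "is_derivation x1 \<delta> \<longleftrightarrow>
     (\<forall>a\<in>algBB x1. \<delta> a \<in> algB x1) \<and>
     (\<forall>a\<in>algBB x1. \<forall>b\<in>algBB x1. \<delta> (a + b) = \<delta> a + \<delta> b) \<and>
     (\<forall>a\<in>algBB x1. \<forall>c. \<delta> (mat_scale c a) = mat_scale c (\<delta> a)) \<and>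
     (\<forall>a\<in>algBB x1. \<forall>b\<in>algBB x1. \<delta> (mat_mult a b) = mat_mult (\<delta> a) b + mat_mult a (\<delta> b))"

text \<open>n-th Fourier component; the operator-valued integral is given by its matrix
  entries (entrywise integrals), rho_theta^{-1} = rho_{-theta}.\<close>
definition fourier_comp :: "(mat \<Rightarrow> mat) \<Rightarrow> int \<Rightarrow> mat \<Rightarrow> mat" where
  "fourier_comp \<delta> n b = (\<lambda>i j. complex_of_real (1 / (2 * pi)) *
      integral {0..2*pi} (\<lambda>\<theta>. exp (\<i> * complex_of_real (real_of_int n * \<theta>)) *
                                rho (- \<theta>) (\<delta> (rho \<theta> b)) i j))"

end

theory Submission
  imports Defs
begin

text \<open>Every element of the *-algebra generated by \<open>V, V\<^sup>-\<^sup>1\<close> and the \<open>M\<^sub>\<chi>\<close> is a finite sum of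
  operators \<open>b\<^sub>q\<close> supported on a single diagonal \<open>i - j = k\<^sub>q\<close>, and these satisfy
  \<open>\<rho>\<^sub>\<theta>(b\<^sub>q) = exp(i k\<^sub>q \<theta>) b\<^sub>q\<close>. By linearity of \<open>\<delta>\<close>, the integrand defining \<open>\<delta>\<^sub>n(b)\<close> is then a
  trigonometric polynomial in \<open>\<theta>\<close>, and its \<open>n\<close>-th coefficient is the diagonal \<open>i - j = n + k\<^sub>q\<close>
  of \<open>\<delta>(b\<^sub>q)\<close>. So the symmetric partial sums of \<open>\<Sum>\<^sub>n \<delta>\<^sub>n(b)\<close> truncate
  \<open>\<delta>(b) = \<Sum>\<^sub>q \<delta>(b\<^sub>q)\<close> to a growing band of diagonals; on a finitely supported \<open>x\<close> the
  error is bounded by tails of finitely many columns of the bounded operators \<open>\<delta>(b\<^sub>q)\<close>,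
  which are square summable.\<close>

lemma infsum_eq_sum_if_support_subset:
  fixes f :: "'a \<Rightarrow> 'b::{comm_monoid_add, t2_space}"
  assumes "finite R" "\<And>j. j \<notin> R \<Longrightarrow> f j = 0"
  shows "infsum f UNIV = sum f R"
proof -
  have "infsum f UNIV = infsum f R"
    by (rule infsum_cong_neutral) (use assms in auto)
  then show ?thesis using assms by simp
qed

lemma sum_apply: "(\<Sum>a\<in>A. f a) x = (\<Sum>a\<in>A. f a x)"
  by (induction A rule: infinite_finite_induct) auto

lemma sum_list_apply: "sum_list fs x = sum_list (map (\<lambda>f. f x) fs)"
  by (induction fs) auto

lemma mat_mult_diag_left: "mat_mult (diag d) A i k = d i * A i k"
  unfolding mat_mult_def diag_def
  by (subst infsum_eq_sum_if_support_subset[where R="{i}"]) auto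

lemma mat_mult_diag_right: "mat_mult A (diag d) i k = A i k * d k"
  unfolding mat_mult_def diag_def
  by (subst infsum_eq_sum_if_support_subset[where R="{k}"]) auto

lemma rho_entry: "rho t A i j = exp (\<i> * of_real (t * of_int (i - j))) * A i j"
proof -
  have "rho t A i j = exp (\<i> * of_real (t * of_int i)) * exp (\<i> * of_real (- t * of_int j)) * A i j"
    unfolding rho_def expL_def by (simp add: mat_mult_diag_left mat_mult_diag_right ac_simps)
  also have "\<dots> = exp (\<i> * of_real (t * of_int (i - j))) * A i j"
    by (simp add: algebra_simps flip: exp_add)
  finally show ?thesis .
qed

lemma rho_sum: "rho t (\<Sum>q\<in>P. B q) = (\<Sum>q\<in>P. rho t (B q))"
  by (simp add: fun_eq_iff rho_entry sum_apply sum_distrib_left)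

definition homogeneous :: "int \<Rightarrow> mat \<Rightarrow> bool" where
  "homogeneous k A \<longleftrightarrow> (\<forall>i j. i - j \<noteq> k \<longrightarrow> A i j = 0)"

lemma rho_homogeneous:
  assumes "homogeneous k A"
  shows "rho t A = mat_scale (exp (\<i> * of_real (t * of_int k))) A"
proof (intro ext)
  fix i j
  show "rho t A i j = mat_scale (exp (\<i> * of_real (t * of_int k))) A i j"
    using assms by (cases "i - j = k") (auto simp: rho_entry mat_scale_def homogeneous_def)
qed

lemma mat_mult_homogeneous_left_entry:
  "homogeneous k A \<Longrightarrow> mat_mult A B i l = A i (i - k) * B (i - k) l"
  unfolding mat_mult_def
  by (subst infsum_eq_sum_if_support_subset[where R="{i - k}"]) (auto simp: homogeneous_def)

lemma homogeneous_mult: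
  assumes "homogeneous k A" "homogeneous l B"
  shows "homogeneous (k + l) (mat_mult A B)"
  using assms(2) by (auto simp: mat_mult_homogeneous_left_entry[OF assms(1)] homogeneous_def)

lemma homogeneous_scale: "homogeneous k A \<Longrightarrow> homogeneous k (mat_scale c A)"
  by (simp add: homogeneous_def mat_scale_def)

lemma homogeneous_adj: "homogeneous k A \<Longrightarrow> homogeneous (- k) (mat_adj A)"
  by (auto simp: homogeneous_def mat_adj_def)

lemma mat_mult_homogeneous_sum_list_right:
  "homogeneous k A \<Longrightarrow> mat_mult A (sum_list Bs) = sum_list (map (mat_mult A) Bs)"
  by (simp add: fun_eq_iff sum_list_apply mat_mult_homogeneous_left_entry sum_list_const_mult comp_def)

lemma mat_mult_homogeneous_sum_list_left:
  assumes "\<forall>(k, A)\<in>set L. homogeneous k A"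
  shows "mat_mult (sum_list (map snd L)) B = sum_list (map (\<lambda>(k, A). mat_mult A B) L)"
proof (intro ext)
  fix i m
  define R where "R = (\<lambda>(k, A). i - k) ` set L"
  have vanish: "(\<Sum>(k, A)\<leftarrow>L. A i j) = 0" if "j \<notin> R" for j
  proof -
    have "(\<Sum>(k, A)\<leftarrow>L. A i j) = (\<Sum>_\<leftarrow>L. 0)"
      using assms that
      by (intro arg_cong[where f=sum_list] map_cong) (force simp: R_def homogeneous_def)+
    then show ?thesis by simp
  qed
  have entry: "sum_list (map snd L) i j = (\<Sum>(k, A)\<leftarrow>L. A i j)" for j
    by (simp add: sum_list_apply comp_def split_def)
  have "mat_mult (sum_list (map snd L)) B i m = (\<Sum>j\<in>R. (\<Sum>(k, A)\<leftarrow>L. A i j) * B j m)"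
    unfolding mat_mult_def entry
    by (rule infsum_eq_sum_if_support_subset) (auto simp: R_def vanish)
  also have "\<dots> = (\<Sum>j\<in>R. \<Sum>(k, A)\<leftarrow>L. A i j * B j m)"
    by (simp add: split_def flip: sum_list_mult_const)
  also have "\<dots> = (\<Sum>(k, A)\<leftarrow>L. \<Sum>j\<in>R. A i j * B j m)"
    by (induction L) (auto simp: sum.distrib)
  also have "\<dots> = (\<Sum>(k, A)\<leftarrow>L. mat_mult A B i m)"
  proof (intro arg_cong[where f=sum_list] map_cong refl, clarify)
    fix k A assume kA: "(k, A) \<in> set L"
    then have "homogeneous k A" using assms by auto
    then show "(\<Sum>j\<in>R. A i j * B j m) = mat_mult A B i m"
      by (subst sum.remove[where x="i - k"]) (auto simp: R_def kA mat_mult_homogeneous_left_entry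
          homogeneous_def intro!: sum.neutral image_eqI[OF _ kA])
  qed
  finally show "mat_mult (sum_list (map snd L)) B i m = sum_list (map (\<lambda>(k, A). mat_mult A B) L) i m"
    by (simp add: sum_list_apply comp_def split_def)
qed

lemma mat_mult_sum_list_homogeneous:
  assumes "\<forall>(k, A)\<in>set L1. homogeneous k A"
  shows "mat_mult (sum_list (map snd L1)) (sum_list (map snd L2)) =
    sum_list (map snd [(k + l, mat_mult A B). (k, A) \<leftarrow> L1, (l, B) \<leftarrow> L2])"
proof -
  have "mat_mult (sum_list (map snd L1)) (sum_list (map snd L2))
      = (\<Sum>(k, A)\<leftarrow>L1. \<Sum>(l, B)\<leftarrow>L2. mat_mult A B)"
    using assms
    by (auto simp: mat_mult_homogeneous_sum_list_left mat_mult_homogeneous_sum_list_right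
        split_def comp_def intro!: arg_cong[where f=sum_list] map_cong)
  also have "\<dots> = sum_list (map snd [(k + l, mat_mult A B). (k, A) \<leftarrow> L1, (l, B) \<leftarrow> L2])"
    by (induction L1) (auto simp: split_def comp_def)
  finally show ?thesis .
qed

lemma star_alg_homogeneous_sum_list:
  assumes gens: "\<forall>A\<in>S. \<exists>k. homogeneous k A" and b: "b \<in> star_alg S"
  defines "H \<equiv> {(k, B). B \<in> star_alg S \<and> homogeneous k B}"
  shows "\<exists>L. set L \<subseteq> H \<and> b = sum_list (map snd L)"
  using b
proof (induction rule: star_alg.induct)
  case (gen A)
  then obtain k where "homogeneous k A" using gens by auto
  then show ?case using gen by (intro exI[of _ "[(k, A)]"]) (auto simp: H_def intro: star_alg.gen)
next
  case (add A B)
  then obtain L1 L2 where "set L1 \<subseteq> H" "A = sum_list (map snd L1)" "set L2 \<subseteq> H" "B = sum_list (map snd L2)"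
    by blast
  then show ?case by (intro exI[of _ "L1 @ L2"]) auto
next
  case (scale A c)
  then obtain L where L: "set L \<subseteq> H" "A = sum_list (map snd L)" by blast
  have "mat_scale c (sum_list (map snd L)) = sum_list (map snd [(k, mat_scale c B). (k, B) \<leftarrow> L])"
    by (simp add: fun_eq_iff mat_scale_def sum_list_apply split_def comp_def flip: sum_list_const_mult)
  with L show ?case
    by (intro exI[of _ "[(k, mat_scale c B). (k, B) \<leftarrow> L]"])
       (auto simp: H_def intro: star_alg.scale homogeneous_scale)
next
  case (mult A B)
  then obtain L1 L2 where L1: "set L1 \<subseteq> H" "A = sum_list (map snd L1)"
    and L2: "set L2 \<subseteq> H" "B = sum_list (map snd L2)"
    by blast
  have "mat_mult A B = sum_list (map snd [(k + l, mat_mult A B). (k, A) \<leftarrow> L1, (l, B) \<leftarrow> L2])"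
    using L1 L2 by (auto simp: H_def intro!: mat_mult_sum_list_homogeneous)
  with L1 L2 show ?case
    by (intro exI[of _ "[(k + l, mat_mult A B). (k, A) \<leftarrow> L1, (l, B) \<leftarrow> L2]"])
       (auto simp: H_def intro: star_alg.mult homogeneous_mult)
next
  case (adj A)
  then obtain L where L: "set L \<subseteq> H" "A = sum_list (map snd L)" by blast
  have "mat_adj (sum_list (map snd L)) = sum_list (map snd [(- k, mat_adj B). (k, B) \<leftarrow> L])"
    by (induction L) (auto simp: fun_eq_iff mat_adj_def)
  with L show ?case
    by (intro exI[of _ "[(- k, mat_adj B). (k, B) \<leftarrow> L]"])
       (auto simp: H_def intro: star_alg.adj homogeneous_adj)
qed

lemma star_alg_homogeneous_decomposition:
  assumes "\<forall>A\<in>S. \<exists>k. homogeneous k A" "b \<in> star_alg S"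
  obtains P :: "nat set" and k B where "finite P" "\<forall>q\<in>P. B q \<in> star_alg S \<and> homogeneous (k q) (B q)"
    "b = (\<Sum>q\<in>P. B q)"
proof -
  obtain L where L: "set L \<subseteq> {(k, B). B \<in> star_alg S \<and> homogeneous k B}" "b = sum_list (map snd L)"
    using star_alg_homogeneous_sum_list[OF assms] by blast
  show thesis
  proof (rule that[of "{..<length L}" "\<lambda>q. snd (L ! q)" "\<lambda>q. fst (L ! q)"])
    show "\<forall>q\<in>{..<length L}. snd (L ! q) \<in> star_alg S \<and> homogeneous (fst (L ! q)) (snd (L ! q))"
      using L(1) nth_mem by fastforce
    show "b = (\<Sum>q\<in>{..<length L}. snd (L ! q))"
      unfolding L(2) by (simp add: sum_list_sum_nth atLeast0LessThan)
  qed simp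
qed

lemma algBB_generators_homogeneous:
  "\<forall>A\<in>{shiftV, shiftVinv} \<union> {multM x1 ch | ch. character ch}. \<exists>k. homogeneous k A"
proof -
  have "homogeneous 1 shiftV" "homogeneous (- 1) shiftVinv" "homogeneous 0 (multM x1 f)" for f
    by (auto simp: homogeneous_def shiftV_def shiftVinv_def multM_def diag_def)
  then show ?thesis by blast
qed

lemma star_alg_sum:
  assumes "S \<noteq> {}" "\<forall>q\<in>P. B q \<in> star_alg S"
  shows "(\<Sum>q\<in>P. B q) \<in> star_alg S"
proof -
  obtain A where "A \<in> S" using assms(1) by blast
  then have "mat_scale 0 A \<in> star_alg S" by (intro star_alg.scale star_alg.gen)
  moreover have "mat_scale 0 A = 0" by (simp add: mat_scale_def fun_eq_iff)
  ultimately have zero: "0 \<in> star_alg S" by simp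
  show ?thesis using assms(2)
    by (induction P rule: infinite_finite_induct) (auto simp: zero intro: star_alg.add)
qed

lemma derivation_sum:
  assumes d: "is_derivation x1 \<delta>" and B: "\<forall>q\<in>P. B q \<in> algBB x1"
  shows "\<delta> (\<Sum>q\<in>P. B q) = (\<Sum>q\<in>P. \<delta> (B q))"
proof -
  have zero: "\<delta> 0 = 0"
  proof -
    have "0 \<in> algBB x1" using star_alg_sum[of _ "{}"] by (simp add: algBB_def)
    then have "\<delta> (mat_scale 0 0) = mat_scale 0 (\<delta> 0)" using d by (simp add: is_derivation_def)
    moreover have "mat_scale 0 A = 0" for A by (simp add: mat_scale_def fun_eq_iff)
    ultimately show ?thesis by simp
  qed
  show ?thesis using B
  proof (induction P rule: infinite_finite_induct)
    case (insert q P)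
    have "(\<Sum>q\<in>P. B q) \<in> algBB x1"
      using insert.prems unfolding algBB_def by (intro star_alg_sum) auto
    then have "\<delta> (B q + (\<Sum>q\<in>P. B q)) = \<delta> (B q) + \<delta> (\<Sum>q\<in>P. B q)"
      using insert.prems d unfolding is_derivation_def by blast
    moreover have "\<delta> (\<Sum>q\<in>P. B q) = (\<Sum>q\<in>P. \<delta> (B q))" using insert by simp
    ultimately show ?case by (simp only: sum.insert[OF insert.hyps])
  qed (simp_all add: zero)
qed

lemma derivation_rho_homogeneous_sum:
  assumes d: "is_derivation x1 \<delta>" and B: "\<forall>q\<in>P. B q \<in> algBB x1 \<and> homogeneous (k q) (B q)"
  shows "\<delta> (rho t (\<Sum>q\<in>P. B q)) = (\<Sum>q\<in>P. mat_scale (exp (\<i> * of_real (t * of_int (k q)))) (\<delta> (B q)))"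
proof -
  have "rho t (\<Sum>q\<in>P. B q) = (\<Sum>q\<in>P. mat_scale (exp (\<i> * of_real (t * of_int (k q)))) (B q))"
    using B by (auto simp: rho_sum rho_homogeneous intro!: sum.cong)
  moreover have "\<forall>q\<in>P. mat_scale c (B q) \<in> algBB x1" for c
    using B unfolding algBB_def by (auto intro: star_alg.scale)
  ultimately show ?thesis
    using B d by (simp add: derivation_sum is_derivation_def)
qed

lemma has_integral_exp_int_period:
  "((\<lambda>t. exp (\<i> * of_real (of_int m * t))) has_integral
     (if m = 0 then complex_of_real (2 * pi) else 0)) {0..2 * pi}"
proof (cases "m = 0")
  case True
  then show ?thesis using has_integral_const_real[of "1::complex" 0 "2 * pi"]
    by (simp add: scaleR_conv_of_real)
next
  case False
  define a where "a = \<i> * of_int m"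
  have a: "exp (\<i> * of_real (of_int m * t)) = exp (a * of_real t)" for t
    by (simp add: a_def mult.assoc)
  have "exp (a * of_real (2 * pi)) = exp (of_real (2 * of_int m * pi) * \<i>)"
    by (simp add: a_def algebra_simps)
  also have "\<dots> = 1" by (rule exp_integer_2pi) simp
  finally have "integral {0..2 * pi} (\<lambda>t. exp (a * of_real t)) = 0"
    using False by (simp add: integral_exp a_def)
  moreover have "(\<lambda>t. exp (a * of_real t)) integrable_on {0..2 * pi}"
    by (intro integrable_continuous_interval continuous_intros)
  ultimately show ?thesis
    using False unfolding a by (metis has_integral_integral)
qed

lemma fourier_comp_trig_sum:
  fixes D :: "'q \<Rightarrow> mat" and k :: "'q \<Rightarrow> int"
  assumes "finite P"
    and orbit: "\<And>t. \<delta> (rho t b) = (\<Sum>q\<in>P. mat_scale (exp (\<i> * of_real (t * of_int (k q)))) (D q))"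
  shows "fourier_comp \<delta> n b i j = (\<Sum>q\<in>P. if n + k q = i - j then D q i j else 0)"
proof -
  have integrand: "exp (\<i> * of_real (of_int n * t)) * rho (- t) (\<delta> (rho t b)) i j
      = (\<Sum>q\<in>P. D q i j * exp (\<i> * of_real (of_int (n + k q - (i - j)) * t)))" for t
  proof -
    have "exp (\<i> * of_real (of_int n * t)) * exp (\<i> * of_real (- t * of_int (i - j)))
        * exp (\<i> * of_real (t * of_int (k q))) = exp (\<i> * of_real (of_int (n + k q - (i - j)) * t))"
      for q by (simp add: algebra_simps flip: exp_add)
    then show ?thesis
      unfolding rho_entry orbit
      by (simp add: sum_apply mat_scale_def sum_distrib_left ac_simps)
  qed
  have "((\<lambda>t. exp (\<i> * of_real (of_int n * t)) * rho (- t) (\<delta> (rho t b)) i j) has_integral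
      (\<Sum>q\<in>P. D q i j * (if n + k q - (i - j) = 0 then complex_of_real (2 * pi) else 0))) {0..2 * pi}"
    unfolding integrand
    by (intro has_integral_sum assms(1) ballI has_integral_mult_right has_integral_exp_int_period)
  then show ?thesis
    unfolding fourier_comp_def
    by (auto simp: integral_unique sum_distrib_left intro!: sum.cong)
qed

lemma bounded_op_column_ell2:
  assumes "bounded_op A"
  shows "ell2 (\<lambda>i. A i j)"
proof -
  define e where "e = (\<lambda>l. if l = j then 1 else 0 :: complex)"
  have "fin_supp e" by (simp add: fin_supp_def e_def)
  then have "ell2 (mat_app A e)" using assms unfolding bounded_op_def by blast
  moreover have "mat_app A e = (\<lambda>i. A i j)"
    unfolding mat_app_def e_def
    by (intro ext, subst infsum_eq_sum_if_support_subset[where R="{j}"]) auto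
  ultimately show ?thesis by simp
qed

lemma summable_on_sum:
  "finite Q \<Longrightarrow> (\<And>q. q \<in> Q \<Longrightarrow> f q summable_on A) \<Longrightarrow> (\<lambda>i. \<Sum>q\<in>Q. f q i) summable_on A"
  for f :: "'q \<Rightarrow> 'a \<Rightarrow> 'b::{topological_comm_monoid_add, t2_space}"
  by (induction Q rule: finite_induct) (auto intro: summable_on_add)

lemma infsum_tail_tendsto_0:
  fixes g :: "int \<Rightarrow> 'a::banach" and c :: int
  assumes g: "g summable_on UNIV"
  shows "(\<lambda>N::nat. infsum g {i. c + int N < \<bar>i\<bar>}) \<longlonglongrightarrow> 0"
proof -
  define K where "K N = {i. \<bar>i\<bar> \<le> c + int N}" for N :: nat
  have finite_K: "finite (K N)" for N
    unfolding K_def by (rule finite_subset[of _ "{- (c + int N)..c + int N}"]) auto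
  have "eventually (\<lambda>N. X \<subseteq> K N) sequentially" if "finite X" for X
  proof -
    have "X \<subseteq> K N" if "N \<ge> nat (Max (insert 0 (abs ` X)) - c)" for N
    proof
      fix i assume "i \<in> X"
      then have "\<bar>i\<bar> \<le> Max (insert 0 (abs ` X))" using \<open>finite X\<close> by (intro Max_ge) auto
      then show "i \<in> K N" using that by (simp add: K_def)
    qed
    then show ?thesis unfolding eventually_sequentially by blast
  qed
  then have "filterlim K (finite_subsets_at_top UNIV) sequentially"
    by (simp add: filterlim_finite_subsets_at_top finite_K)
  then have "(\<lambda>N. sum g (K N)) \<longlonglongrightarrow> infsum g UNIV"
    by (rule filterlim_compose[OF infsum_tendsto[OF g]])
  from tendsto_diff[OF tendsto_const[of "infsum g UNIV"] this]
  have "(\<lambda>N. infsum g UNIV - sum g (K N)) \<longlonglongrightarrow> 0" by simp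
  moreover have "infsum g {i. c + int N < \<bar>i\<bar>} = infsum g UNIV - sum g (K N)" for N
  proof -
    have "UNIV = K N \<union> {i. c + int N < \<bar>i\<bar>}" "K N \<inter> {i. c + int N < \<bar>i\<bar>} = {}"
      by (auto simp: K_def)
    then have "infsum g UNIV = infsum g (K N) + infsum g {i. c + int N < \<bar>i\<bar>}"
      using summable_on_subset_banach[OF g] by (metis infsum_Un_disjoint subset_UNIV)
    then show ?thesis using finite_K[of N] by simp
  qed
  ultimately show ?thesis by simp
qed

lemma l2norm_tendsto_0_if_tail_dominated:
  fixes v :: "nat \<Rightarrow> vec" and g :: "int \<Rightarrow> real" and c :: int
  assumes g: "g summable_on UNIV"
    and dom: "\<And>N i. (cmod (v N i))\<^sup>2 \<le> (if c + int N < \<bar>i\<bar> then g i else 0)"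
  shows "(\<lambda>N. l2norm (v N)) \<longlonglongrightarrow> 0"
proof -
  define T where "T N = {i. c + int N < \<bar>i\<bar>}" for N :: nat
  define h where "h N i = (if c + int N < \<bar>i\<bar> then g i else 0)" for N i
  have h_summable: "h N summable_on UNIV" for N
    using summable_on_subset_banach[OF g, of "T N"]
    by (subst summable_on_cong_neutral[where T="T N" and g=g]) (auto simp: h_def T_def)
  have h_infsum: "infsum (h N) UNIV = infsum g (T N)" for N
    by (rule infsum_cong_neutral) (auto simp: h_def T_def)
  have v_summable: "(\<lambda>i. (cmod (v N i))\<^sup>2) summable_on UNIV" for N
    by (rule summable_on_comparison_test[OF h_summable[of N]]) (simp_all add: h_def dom)
  have "(\<lambda>N. infsum (\<lambda>i. (cmod (v N i))\<^sup>2) UNIV) \<longlonglongrightarrow> 0"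
  proof (rule tendsto_sandwich[OF _ _ tendsto_const])
    show "\<forall>\<^sub>F N in sequentially. 0 \<le> infsum (\<lambda>i. (cmod (v N i))\<^sup>2) UNIV"
      by (simp add: infsum_nonneg)
    show "\<forall>\<^sub>F N in sequentially. infsum (\<lambda>i. (cmod (v N i))\<^sup>2) UNIV \<le> infsum g (T N)"
      using infsum_mono[OF v_summable h_summable] by (simp add: h_infsum h_def dom)
    show "(\<lambda>N. infsum g (T N)) \<longlonglongrightarrow> 0"
      unfolding T_def by (rule infsum_tail_tendsto_0[OF g])
  qed
  from tendsto_real_sqrt[OF this] show ?thesis by (simp add: l2norm_def)
qed

lemma diagonal_partial_sums_tendsto:
  fixes D :: "'q \<Rightarrow> mat" and k :: "'q \<Rightarrow> int"
  assumes "finite P" "fin_supp x" and col: "\<And>q j. q \<in> P \<Longrightarrow> ell2 (\<lambda>i. D q i j)"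
  shows "(\<lambda>N::nat. l2norm ((\<Sum>n\<in>{- int N..int N}.
            mat_app (\<lambda>i j. \<Sum>q\<in>P. if n + k q = i - j then D q i j else 0) x)
          - mat_app (\<Sum>q\<in>P. D q) x)) \<longlonglongrightarrow> 0"
proof -
  define S where "S = {j. x j \<noteq> 0}"
  define Q where "Q = S \<times> P"
  have "finite Q" using assms(1,2) by (simp add: Q_def S_def fin_supp_def)
  define a where "a = (\<lambda>(j, q) i. D q i j * x j)"
  define far where "far = (\<lambda>N i (j, q). int N < \<bar>i - j - k q\<bar>)"
  define E where "E N = (\<Sum>n\<in>{- int N..int N}.
      mat_app (\<lambda>i j. \<Sum>q\<in>P. if n + k q = i - j then D q i j else 0) x) - mat_app (\<Sum>q\<in>P. D q) x"
    for N :: nat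
  have app: "mat_app A x i = (\<Sum>j\<in>S. A i j * x j)" for A i
    unfolding mat_app_def
    by (rule infsum_eq_sum_if_support_subset) (use assms(2) in \<open>auto simp: S_def fin_supp_def\<close>)
  have truncation: "(\<Sum>n\<in>{- int N..int N}. if n + k q = i - j then D q i j else 0)
      = D q i j - (if far N i (j, q) then D q i j else 0)" for N i j q
  proof -
    have "(\<Sum>n\<in>{- int N..int N}. if n + k q = i - j then D q i j else 0)
        = (\<Sum>n\<in>{- int N..int N}. if n = i - j - k q then D q i j else 0)"
      by (intro sum.cong) auto
    then show ?thesis by (auto simp: far_def)
  qed
  have E: "E N i = - (\<Sum>r\<in>Q. if far N i r then a r i else 0)" for N i
  proof -
    have "E N i = (\<Sum>j\<in>S. \<Sum>q\<in>P. (\<Sum>n\<in>{- int N..int N}. if n + k q = i - j then D q i j else 0) * x j)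
        - (\<Sum>j\<in>S. \<Sum>q\<in>P. D q i j * x j)"
      unfolding E_def by (simp add: app sum_apply sum_distrib_right sum.swap[of _ "{- int N..int N}"])
    also have "\<dots> = (\<Sum>j\<in>S. \<Sum>q\<in>P. - (if far N i (j, q) then a (j, q) i else 0))"
      unfolding truncation
      by (auto simp: a_def left_diff_distrib simp flip: sum_subtractf intro!: sum.cong)
    also have "\<dots> = - (\<Sum>r\<in>Q. if far N i r then a r i else 0)"
      by (simp add: Q_def sum.cartesian_product sum_negf)
    finally show ?thesis .
  qed
  define M where "M = (\<Sum>r\<in>Q. \<bar>fst r + k (snd r)\<bar>)"
  define g where "g i = real (card Q) * (\<Sum>r\<in>Q. (cmod (a r i))\<^sup>2)" for i
  have "g summable_on UNIV"
    unfolding g_def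
  proof (intro summable_on_cmult_right summable_on_sum \<open>finite Q\<close>)
    fix r assume "r \<in> Q"
    then obtain j q where r: "r = (j, q)" "q \<in> P" by (auto simp: Q_def)
    have "(\<lambda>i. (cmod (D q i j))\<^sup>2 * (cmod (x j))\<^sup>2) summable_on UNIV"
      using col[OF r(2)] unfolding ell2_def by (rule summable_on_cmult_left)
    then show "(\<lambda>i. (cmod (a r i))\<^sup>2) summable_on UNIV"
      by (simp add: r a_def norm_mult power_mult_distrib)
  qed
  moreover have "(cmod (E N i))\<^sup>2 \<le> (if - M + int N < \<bar>i\<bar> then g i else 0)" for N i
  proof (cases "- M + int N < \<bar>i\<bar>")
    case False
    have "\<not> far N i r" if "r \<in> Q" for r
    proof -
      have "\<bar>fst r + k (snd r)\<bar> \<le> M"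
        unfolding M_def using \<open>finite Q\<close> that by (intro member_le_sum) auto
      with False show ?thesis by (auto simp: far_def)
    qed
    then show ?thesis using False by (simp add: E)
  next
    case True
    have "(cmod (E N i))\<^sup>2 \<le> (\<Sum>r\<in>Q. cmod (if far N i r then a r i else 0))\<^sup>2"
      unfolding E norm_minus_cancel by (intro power_mono norm_sum) simp
    also have "\<dots> \<le> (\<Sum>r\<in>Q. (cmod (if far N i r then a r i else 0))\<^sup>2) * card Q"
      by (rule sum_squared_le_sum_of_squares)
    also have "\<dots> \<le> g i"
      unfolding g_def by (auto simp: mult.commute intro!: mult_left_mono sum_mono)
    finally show ?thesis using True by simp
  qed
  ultimately show ?thesis
    unfolding E_def[symmetric] by (rule l2norm_tendsto_0_if_tail_dominated)
qed

theorem proposition3p16: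
  fixes x1 :: "'g::{t2_space, ab_group_add}"
    and \<delta> :: "mat \<Rightarrow> mat" and b :: mat and x :: vec
  assumes "infinite_compact_abelian_group TYPE('g)"
    and "closure (range (\<lambda>n::int. zmult n x1)) = UNIV"
    and "is_derivation x1 \<delta>"
    and "b \<in> algBB x1"
    and "fin_supp x"
  shows "(\<lambda>N::nat. l2norm ((\<Sum>n\<in>{- int N..int N}. mat_app (fourier_comp \<delta> n b) x)
                              - mat_app (\<delta> b) x)) \<longlonglongrightarrow> 0"
proof -
  obtain P :: "nat set" and k B where P: "finite P"
    and B: "\<forall>q\<in>P. B q \<in> algBB x1 \<and> homogeneous (k q) (B q)" and b: "b = (\<Sum>q\<in>P. B q)"
    unfolding algBB_def
    by (rule star_alg_homogeneous_decomposition[OF algBB_generators_homogeneous assms(4)[unfolded algBB_def]])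
  have fourier: "fourier_comp \<delta> n b = (\<lambda>i j. \<Sum>q\<in>P. if n + k q = i - j then \<delta> (B q) i j else 0)" for n
    unfolding b using fourier_comp_trig_sum[OF P derivation_rho_homogeneous_sum[OF assms(3) B]] by blast
  have derivation: "\<delta> b = (\<Sum>q\<in>P. \<delta> (B q))"
    unfolding b using B by (intro derivation_sum[OF assms(3)]) blast
  have "ell2 (\<lambda>i. \<delta> (B q) i j)" if "q \<in> P" for q j
  proof -
    have "\<delta> (B q) \<in> algB x1" using assms(3) B that by (simp add: is_derivation_def)
    then show ?thesis by (intro bounded_op_column_ell2) (simp add: algB_def cstar_alg_def)
  qed
  then show ?thesis
    unfolding fourier derivation by (rule diagonal_partial_sums_tendsto[OF P assms(5)])
qed

end
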